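(* Let $\lambda>0$, $\mu>0$ with $\lambda<\mu+1$. For $\theta>0$ let $$\alpha^*(\theta)=\begin{cases}\mu+\theta(1-\lambda), & \lambda\theta\le 1,\\ \theta+\mu+1-2\sqrt{\lambda\theta}, & \lambda\theta>1,\end{cases}$$ and $V(\theta)=[\alpha^*(\theta)]^2/2$. Let $0<\theta_L<\theta_F$. 1. If $\lambda\le 1$, then $V$ is weakly increasing on $(0,\infty)$, so the firm weakly prefers $\theta_F$ to $\theta_L$. 2. If $\lambda>1$, then $V$ is U-shaped with global minimum at $\theta=\lambda$ (strictly decreasing on $(0,\lambda)$, strictly increasing on $(\lambda,\infty)$), and every maximizer of $V$ over $[\theta_L,\theta_F]$ is an endpoint. Moreover: (a) if $\theta_F\le\lambda$, $V$ is strictly decreasing on $[\theta_L,\theta_F]$ and the firm chooses $\theta_L$ (rejects the upgrade); (b) if $\theta_F>\lambda$, the firm upgrades (chooses $\theta_F$) if and only if $V(\theta_F)>V(\theta_L)$. When in addition $\lambda\theta_L>1$, this is equivalent to $\sqrt{\theta_F}+\sqrt{\theta_L}>2\sqrt{\lambda}$, or equivalently (given $\theta_F>\theta_L$) to $\theta_F>\big[\max\{0,\,2\sqrt{\lambda}-\sqrt{\theta_L}\}\big]^2$. When $\lambda\theta_L\le 1$, $V(\theta_L)=[\mu+\theta_L(1-\lambda)]^2/2$.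
   Context: A firm with profit $\pi(\alpha,d)=(\theta+\mu)\alpha-\alpha^2/2-\frac{\alpha}{\alpha+d}\lambda\alpha\theta-d$ (deployment $\alpha$, security investment $d\ge0$, capability $\theta$, breach-loss magnitude $\lambda$, readiness $\mu$) chooses capability $\theta\in\{\theta_L,\theta_F\}$ (legacy vs. frontier) to maximize firm value $V(\theta)$, where $\alpha^*(\theta)$ is its optimal deployment and $V(\theta)=[\alpha^*(\theta)]^2/2$ is its maximized profit given $\theta$. *)

theory Defs
  imports Complex_Main
begin

definition alpha_star :: "real \<Rightarrow> real \<Rightarrow> real \<Rightarrow> real" where
  "alpha_star lam mu \<theta> =
     (if lam * \<theta> \<le> 1 then mu + \<theta> * (1 - lam)
      else \<theta> + mu + 1 - 2 * sqrt (lam * \<theta>))"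

definition firm_value :: "real \<Rightarrow> real \<Rightarrow> real \<Rightarrow> real" where
  "firm_value lam mu \<theta> = (alpha_star lam mu \<theta>)^2 / 2"

text \<open>The firm upgrades (chooses theta_F over theta_L) when it strictly prefers
  theta_F; ties are resolved in favour of the legacy capability.\<close>
definition upgrades :: "real \<Rightarrow> real \<Rightarrow> real \<Rightarrow> real \<Rightarrow> bool" where
  "upgrades lam mu \<theta>L \<theta>F \<longleftrightarrow> firm_value lam mu \<theta>L < firm_value lam mu \<theta>F"

end

theory Submission
  imports Defs
begin

(* Above the threshold lam * theta = 1 the optimal deployment can be written as
   alpha*(theta) = (sqrt theta - sqrt lam)^2 + mu + 1 - lam, and at the threshold this agrees
   with the affine branch mu + theta (1 - lam). For lam <= 1 both pieces are nondecreasing; for lam > 1,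
   alpha* decreases up to theta = lam and increases afterwards, so its minimum is
   mu + 1 - lam >= 0. Because alpha* >= 0, V = alpha*^2 / 2 is monotone wherever alpha* is, so for
   lam > 1 it is U-shaped and no interior point of [theta_L, theta_F] is a maximizer. When both
   capabilities are above the threshold, the difference of the squares is
   (sqrt theta_F - sqrt theta_L) (sqrt theta_F + sqrt theta_L - 2 sqrt lam), and this gives the
   square-root criterion. *)

lemma monotone_on_Un_at_junction:
  fixes f :: "'a::linorder \<Rightarrow> 'b"
  assumes mono_A: "monotone_on A (<) ord f" and mono_B: "monotone_on B (<) ord f"
    and "transp ord" and "c \<in> A" "c \<in> B" and "\<forall>x\<in>A. x \<le> c" "\<forall>y\<in>B. c \<le> y"
  shows "monotone_on (A \<union> B) (<) ord f"
proof (rule monotone_onI)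
  fix x y assume "x \<in> A \<union> B" "y \<in> A \<union> B" "x < y"
  then consider "x \<in> A" "y \<in> A" | "x \<in> B" "y \<in> B" | "x \<in> A" "y \<in> B" "x < c" "c < y"
    | "x = c" "y \<in> B" | "x \<in> A" "y = c"
    using assms(6,7) by fastforce
  then show "ord (f x) (f y)"
  proof cases
    case 3
    then show ?thesis
      using monotone_onD[OF mono_A] monotone_onD[OF mono_B] \<open>transp ord\<close> assms(4,5)
      by (meson transpD)
  qed (use monotone_onD[OF mono_A] monotone_onD[OF mono_B] \<open>x < y\<close> assms(4,5) in auto)
qed

lemma valley_minimum:
  fixes f :: "'a::linorder \<Rightarrow> 'b::order"
  assumes "strict_antimono_on {a<..c} f" "strict_mono_on {c..} f" "a < c" "a < x"
  shows "f c \<le> f x"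
proof (cases x c rule: linorder_cases)
  case less
  then have "f c < f x"
    using assms monotone_onD[OF assms(1), of x c] by simp
  then show ?thesis
    by simp
next
  case greater
  then have "f c < f x"
    using assms monotone_onD[OF assms(2), of c x] by simp
  then show ?thesis
    by simp
qed simp

lemma valley_maximizer_at_endpoint:
  fixes f :: "'a::linorder \<Rightarrow> 'b::linorder"
  assumes "strict_antimono_on {a..c} f" "strict_mono_on {c..b} f"
    and "x \<in> {a..b}" "\<forall>t\<in>{a..b}. f t \<le> f x"
  shows "x = a \<or> x = b"
proof (rule ccontr)
  assume "\<not> (x = a \<or> x = b)"
  with assms(3) have "a < x" "x < b" by auto
  have "f x < f a" if "x \<le> c"
    using that \<open>a < x\<close> monotone_onD[OF assms(1), of a x] by auto
  moreover have "f x < f b" if "c \<le> x"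
    using that \<open>x < b\<close> monotone_onD[OF assms(2), of x b] by auto
  ultimately have "f x < f a \<or> f x < f b"
    by (meson le_cases)
  with assms(4) \<open>a < x\<close> \<open>x < b\<close> show False
    by (auto simp: not_le[symmetric])
qed

lemma power2_diff_less_power2_diff_iff:
  fixes a b r :: "'a::linordered_idom"
  assumes "a < b"
  shows "(a - r)\<^sup>2 < (b - r)\<^sup>2 \<longleftrightarrow> 2 * r < a + b"
proof -
  have "(b - r)\<^sup>2 - (a - r)\<^sup>2 = (b - a) * (a + b - 2 * r)"
    by (simp add: power2_eq_square algebra_simps)
  moreover have "0 < (b - a) * (a + b - 2 * r) \<longleftrightarrow> 2 * r < a + b"
    using assms by (simp add: zero_less_mult_iff)
  ultimately show ?thesis
    by (metis diff_gt_0_iff_gt)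
qed

lemma max_zero_power2_less_iff:
  fixes u t :: real
  assumes "0 < t"
  shows "(max 0 u)\<^sup>2 < t \<longleftrightarrow> u < sqrt t"
proof -
  have "(max 0 u)\<^sup>2 < t \<longleftrightarrow> max 0 u < sqrt t"
    using assms real_sqrt_less_iff[of "(max 0 u)\<^sup>2" t] by simp
  then show ?thesis
    using assms by simp
qed

lemma alpha_star_below_threshold:
  "lam * \<theta> \<le> 1 \<Longrightarrow> alpha_star lam mu \<theta> = mu + \<theta> * (1 - lam)"
  by (simp add: alpha_star_def)

lemma alpha_star_above_threshold:
  assumes "0 < lam" "0 \<le> \<theta>" "1 \<le> lam * \<theta>"
  shows "alpha_star lam mu \<theta> = (sqrt \<theta> - sqrt lam)\<^sup>2 + mu + 1 - lam"
proof -
  have "(sqrt \<theta> - sqrt lam)\<^sup>2 = \<theta> + lam - 2 * sqrt (lam * \<theta>)"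
    using assms by (simp add: power2_diff real_sqrt_mult)
  moreover have "sqrt (lam * \<theta>) = 1" if "lam * \<theta> = 1"
    using that by simp
  ultimately show ?thesis
    using assms by (auto simp: alpha_star_def algebra_simps)
qed

lemma alpha_star_strict_antimono_on:
  assumes "1 < lam"
  shows "strict_antimono_on {0<..lam} (alpha_star lam mu)"
proof -
  define c where "c = 1 / lam"
  have c: "0 < c" "c < lam"
    using assms by (auto simp: c_def field_simps less_1_mult)
  have below: "lam * x \<le> 1 \<longleftrightarrow> x \<le> c" and above: "1 \<le> lam * x \<longleftrightarrow> c \<le> x" for x
    using assms by (auto simp: c_def field_simps mult.commute)
  have piece_below: "strict_antimono_on {0<..c} (alpha_star lam mu)"
  proof (rule monotone_onI)
    fix x y :: real assume "x \<in> {0<..c}" "y \<in> {0<..c}" "x < y"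
    moreover have "x * (lam - 1) < y * (lam - 1)"
      using \<open>x < y\<close> assms by simp
    ultimately show "alpha_star lam mu y < alpha_star lam mu x"
      by (simp add: below alpha_star_below_threshold algebra_simps)
  qed
  have piece_above: "strict_antimono_on {c..lam} (alpha_star lam mu)"
  proof (rule monotone_onI)
    fix x y :: real assume "x \<in> {c..lam}" "y \<in> {c..lam}" "x < y"
    moreover from this have "(sqrt lam - sqrt y)\<^sup>2 < (sqrt lam - sqrt x)\<^sup>2"
      by (intro power_strict_mono) auto
    ultimately show "alpha_star lam mu y < alpha_star lam mu x"
      using c assms by (simp add: above alpha_star_above_threshold power2_commute)
  qed
  have "strict_antimono_on ({0<..c} \<union> {c..lam}) (alpha_star lam mu)"
    using piece_below piece_above c by (intro monotone_on_Un_at_junction) (auto intro: transpI)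
  moreover have "{0<..c} \<union> {c..lam} = {0<..lam}"
    using c by auto
  ultimately show ?thesis
    by simp
qed

lemma alpha_star_strict_mono_on:
  assumes "0 < lam" "lam \<le> a" "1 \<le> lam * a"
  shows "strict_mono_on {a..} (alpha_star lam mu)"
proof (rule monotone_onI)
  fix x y :: real assume "x \<in> {a..}" "y \<in> {a..}" "x < y"
  moreover from this assms have "1 \<le> lam * x" "1 \<le> lam * y"
    by (meson atLeast_iff mult_left_mono order_trans less_imp_le)+
  moreover from calculation assms have "(sqrt x - sqrt lam)\<^sup>2 < (sqrt y - sqrt lam)\<^sup>2"
    by (intro power_strict_mono) auto
  ultimately show "alpha_star lam mu x < alpha_star lam mu y"
    using assms by (simp add: alpha_star_above_threshold)
qed

lemma alpha_star_mono_on: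
  assumes "0 < lam" "lam \<le> 1"
  shows "mono_on {0<..} (alpha_star lam mu)"
proof -
  define c where "c = 1 / lam"
  have "0 < c" "lam \<le> c" "1 \<le> lam * c"
    using assms by (auto simp: c_def field_simps mult_le_one)
  have below: "lam * x \<le> 1 \<longleftrightarrow> x \<le> c" for x
    using assms by (auto simp: c_def field_simps mult.commute)
  have piece_below: "monotone_on {0<..c} (<) (\<le>) (alpha_star lam mu)"
  proof (rule monotone_onI)
    fix x y :: real assume "x \<in> {0<..c}" "y \<in> {0<..c}" "x < y"
    moreover have "x * (1 - lam) \<le> y * (1 - lam)"
      using \<open>x < y\<close> assms by (simp add: mult_right_mono)
    ultimately show "alpha_star lam mu x \<le> alpha_star lam mu y"
      by (simp add: below alpha_star_below_threshold algebra_simps)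
  qed
  have piece_above: "monotone_on {c..} (<) (\<le>) (alpha_star lam mu)"
    using alpha_star_strict_mono_on[OF assms(1) \<open>lam \<le> c\<close> \<open>1 \<le> lam * c\<close>, of mu]
    by (auto simp: monotone_on_def intro: less_imp_le)
  have "monotone_on ({0<..c} \<union> {c..}) (<) (\<le>) (alpha_star lam mu)"
    using piece_below piece_above \<open>0 < c\<close>
    by (intro monotone_on_Un_at_junction) (auto intro: transpI)
  moreover have "{0<..c} \<union> {c..} = {0<..}"
    using \<open>0 < c\<close> by auto
  ultimately show ?thesis
    by (auto simp: monotone_on_def order_le_less)
qed

lemma alpha_star_at_lam:
  "1 \<le> lam \<Longrightarrow> alpha_star lam mu lam = mu + 1 - lam"
  by (simp add: alpha_star_above_threshold one_le_power power2_eq_square[symmetric])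

lemma alpha_star_nonneg:
  assumes "0 < lam" "0 \<le> mu" "lam \<le> mu + 1" "0 < \<theta>"
  shows "0 \<le> alpha_star lam mu \<theta>"
proof (cases "lam \<le> 1")
  case True
  show ?thesis
  proof (cases "lam * \<theta> \<le> 1")
    case True
    then show ?thesis
      using \<open>lam \<le> 1\<close> assms by (simp add: alpha_star_below_threshold)
  next
    case False
    then have "alpha_star lam mu \<theta> = (sqrt \<theta> - sqrt lam)\<^sup>2 + mu + 1 - lam"
      using assms by (simp add: alpha_star_above_threshold)
    moreover have "0 \<le> (sqrt \<theta> - sqrt lam)\<^sup>2"
      by simp
    ultimately show ?thesis
      using \<open>lam \<le> 1\<close> assms by linarith
  qed
next
  case False
  then have "alpha_star lam mu lam \<le> alpha_star lam mu \<theta>"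
    using assms alpha_star_strict_antimono_on alpha_star_strict_mono_on[of lam lam mu]
    by (intro valley_minimum[of 0 lam]) (auto simp: less_1_mult less_imp_le)
  then show ?thesis
    using False assms by (simp add: alpha_star_at_lam)
qed

lemma firm_value_le_iff:
  assumes "0 \<le> alpha_star lam mu x" "0 \<le> alpha_star lam mu y"
  shows "firm_value lam mu x \<le> firm_value lam mu y \<longleftrightarrow> alpha_star lam mu x \<le> alpha_star lam mu y"
  using assms by (simp add: firm_value_def)

lemma firm_value_less_iff:
  assumes "0 \<le> alpha_star lam mu x" "0 \<le> alpha_star lam mu y"
  shows "firm_value lam mu x < firm_value lam mu y \<longleftrightarrow> alpha_star lam mu x < alpha_star lam mu y"
  using firm_value_le_iff[of lam mu y x] assms by (simp add: not_le[symmetric])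

lemma firm_value_mono_on:
  assumes "0 < lam" "lam \<le> 1" "0 \<le> mu"
  shows "mono_on {0<..} (firm_value lam mu)"
  using alpha_star_mono_on[OF assms(1,2), of mu] alpha_star_nonneg[of lam mu] assms
  by (simp add: monotone_on_def firm_value_le_iff)

lemma firm_value_strict_antimono_on:
  assumes "1 < lam" "lam \<le> mu + 1"
  shows "strict_antimono_on {0<..lam} (firm_value lam mu)"
  using alpha_star_strict_antimono_on[OF assms(1), of mu] alpha_star_nonneg[of lam mu] assms
  by (simp add: monotone_on_def firm_value_less_iff)

lemma firm_value_strict_mono_on:
  assumes "1 < lam" "lam \<le> mu + 1"
  shows "strict_mono_on {lam..} (firm_value lam mu)"
  using alpha_star_strict_mono_on[of lam lam mu] alpha_star_nonneg[of lam mu] assms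
  by (simp add: monotone_on_def firm_value_less_iff less_1_mult less_imp_le)

lemma firm_value_less_iff_sqrt_sum:
  assumes "0 < lam" "lam \<le> mu + 1" "1 \<le> lam * \<theta>L" "\<theta>L < \<theta>F"
  shows "firm_value lam mu \<theta>L < firm_value lam mu \<theta>F \<longleftrightarrow> 2 * sqrt lam < sqrt \<theta>F + sqrt \<theta>L"
proof -
  have "0 < \<theta>L"
    using assms(1,3) zero_less_mult_pos[of lam \<theta>L] by linarith
  moreover have "1 \<le> lam * \<theta>F"
    using assms(1,3,4) mult_left_mono[of \<theta>L \<theta>F lam] by linarith
  ultimately have alpha_L: "alpha_star lam mu \<theta>L = (sqrt \<theta>L - sqrt lam)\<^sup>2 + mu + 1 - lam"
    and alpha_F: "alpha_star lam mu \<theta>F = (sqrt \<theta>F - sqrt lam)\<^sup>2 + mu + 1 - lam"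
    using assms by (simp_all add: alpha_star_above_threshold)
  have square_nonneg: "0 \<le> (sqrt \<theta> - sqrt lam)\<^sup>2" for \<theta>
    by simp
  have "0 \<le> alpha_star lam mu \<theta>L" "0 \<le> alpha_star lam mu \<theta>F"
    unfolding alpha_L alpha_F using square_nonneg[of \<theta>L] square_nonneg[of \<theta>F] assms(2)
    by linarith+
  then have "firm_value lam mu \<theta>L < firm_value lam mu \<theta>F
      \<longleftrightarrow> (sqrt \<theta>L - sqrt lam)\<^sup>2 < (sqrt \<theta>F - sqrt lam)\<^sup>2"
    by (simp add: firm_value_less_iff alpha_L alpha_F)
  also have "\<dots> \<longleftrightarrow> 2 * sqrt lam < sqrt \<theta>L + sqrt \<theta>F"
    using assms(4) by (simp add: power2_diff_less_power2_diff_iff)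
  finally show ?thesis
    by (simp add: add.commute)
qed

theorem proposition5:
  fixes lam mu \<theta>L \<theta>F :: real
  defines "V \<equiv> firm_value lam mu"
  assumes lam_pos: "0 < lam" and mu_pos: "0 < mu" and lam_lt: "lam < mu + 1"
    and thL_pos: "0 < \<theta>L" and th_lt: "\<theta>L < \<theta>F"
  shows
    "(lam \<le> 1 \<longrightarrow>
        (\<forall>x y. 0 < x \<longrightarrow> x \<le> y \<longrightarrow> V x \<le> V y) \<and> V \<theta>L \<le> V \<theta>F)
   \<and> (1 < lam \<longrightarrow>
        (\<forall>x y. 0 < x \<longrightarrow> x < y \<longrightarrow> y < lam \<longrightarrow> V y < V x)
      \<and> (\<forall>x y. lam < x \<longrightarrow> x < y \<longrightarrow> V x < V y)
      \<and> (\<forall>x. 0 < x \<longrightarrow> V lam \<le> V x)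
      \<and> (\<forall>\<theta>\<in>{\<theta>L..\<theta>F}. (\<forall>t\<in>{\<theta>L..\<theta>F}. V t \<le> V \<theta>) \<longrightarrow> \<theta> = \<theta>L \<or> \<theta> = \<theta>F)
      \<and> (\<theta>F \<le> lam \<longrightarrow>
          (\<forall>x y. \<theta>L \<le> x \<longrightarrow> x < y \<longrightarrow> y \<le> \<theta>F \<longrightarrow> V y < V x)
          \<and> V \<theta>F < V \<theta>L \<and> \<not> upgrades lam mu \<theta>L \<theta>F)
      \<and> (lam < \<theta>F \<longrightarrow>
          (upgrades lam mu \<theta>L \<theta>F \<longleftrightarrow> V \<theta>L < V \<theta>F)
          \<and> (1 < lam * \<theta>L \<longrightarrow>
               (V \<theta>L < V \<theta>F \<longleftrightarrow> 2 * sqrt lam < sqrt \<theta>F + sqrt \<theta>L)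
             \<and> (V \<theta>L < V \<theta>F \<longleftrightarrow> (max 0 (2 * sqrt lam - sqrt \<theta>L))^2 < \<theta>F))
          \<and> (lam * \<theta>L \<le> 1 \<longrightarrow> V \<theta>L = (mu + \<theta>L * (1 - lam))^2 / 2)))"
proof -
  have thF_pos: "0 < \<theta>F"
    using thL_pos th_lt by linarith
  have mono: "mono_on {0<..} V" if "lam \<le> 1"
    using firm_value_mono_on[OF lam_pos that] mu_pos by (simp add: V_def)
  have dec: "strict_antimono_on {0<..lam} V" and inc: "strict_mono_on {lam..} V" if "1 < lam"
    using firm_value_strict_antimono_on firm_value_strict_mono_on that lam_lt
    by (simp_all add: V_def)
  have rejects: "V \<theta>F < V \<theta>L" if "1 < lam" "\<theta>F \<le> lam"
    using monotone_onD[OF dec[OF that(1)], of \<theta>L \<theta>F] thL_pos th_lt that by simp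
  have endpoint: "\<theta> = \<theta>L \<or> \<theta> = \<theta>F"
    if "1 < lam" "\<theta> \<in> {\<theta>L..\<theta>F}" "\<forall>t\<in>{\<theta>L..\<theta>F}. V t \<le> V \<theta>" for \<theta>
  proof (rule valley_maximizer_at_endpoint[OF _ _ that(2,3)])
    show "strict_antimono_on {\<theta>L..lam} V"
      using thL_pos by (intro monotone_on_subset[OF dec[OF that(1)]]) auto
    show "strict_mono_on {lam..\<theta>F} V"
      by (intro monotone_on_subset[OF inc[OF that(1)]]) auto
  qed
  have sqrt_sum: "V \<theta>L < V \<theta>F \<longleftrightarrow> 2 * sqrt lam < sqrt \<theta>F + sqrt \<theta>L" if "1 < lam * \<theta>L"
    using firm_value_less_iff_sqrt_sum lam_pos lam_lt that th_lt by (simp add: V_def)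
  have threshold: "(max 0 (2 * sqrt lam - sqrt \<theta>L))\<^sup>2 < \<theta>F \<longleftrightarrow> 2 * sqrt lam < sqrt \<theta>F + sqrt \<theta>L"
    using max_zero_power2_less_iff[OF thF_pos, of "2 * sqrt lam - sqrt \<theta>L"] by linarith
  have legacy: "V \<theta>L = (mu + \<theta>L * (1 - lam))\<^sup>2 / 2" if "lam * \<theta>L \<le> 1"
    using that by (simp add: V_def firm_value_def alpha_star_below_threshold)
  show ?thesis
    using mono dec inc valley_minimum[OF dec inc] rejects rejects[THEN less_imp_not_less]
      endpoint sqrt_sum threshold legacy thL_pos th_lt
    unfolding upgrades_def V_def[symmetric] monotone_on_def
    by auto
qed

end
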